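(* Let $\Lambda=(I,\varphi_i,\gamma_{ij})$ be a direct system of formulas in a functional language $\mathcal{L}$. Suppose $\{\mathcal{B}_i: i\in I\}$ is a family of $\mathcal{L}$-algebras such that $\varphi_i$ can be realized in $\mathcal{B}_i$ for each $i\in I$. Then there is an ultrafilter $D$ over $I$ such that the limit algebra $L(\Lambda)$ embeds into the ultraproduct $\prod_{i\in I}\mathcal{B}_i/D$.
   Context: Functional language: operation symbols $F$ (arity $n_F$) and constants only. A diagram-formula in a finite reduct $\mathcal{L}'$ of $\mathcal{L}$ in a finite variable set $X$ is a conjunction of atomic formulas and negated atomic formulas of $\mathcal{L}'$ such that: $\neg(x=y)$ is a conjunct for all distinct $x,y\in X$; for each operation $F\in\mathcal{L}'$ and $(x_0,\dots,x_{n_F})\in X^{n_F+1}$ exactly one of $F(x_1,\dots,x_{n_F})=x_0$ and its negation is a conjunct; for each constant $c\in\mathcal{L}'$ and $x\in X$ exactly one of $x=c$, $\neg(x=c)$ is a conjunct. A direct system of formulas $\Lambda=(I,\varphi_i,\gamma_{ij})$: $(I,\le)$ a directed poset; for each $i$ a consistent diagram-formula $\varphi_i$ in a finite reduct $\mathcal{L}_i$ and finite variables $X_i$; maps $\gamma_{ij}:X_i\to X_j$ for $i\le j$ with $\gamma_{ii}=\mathrm{id}$, $\gamma_{jk}\circ\gamma_{ij}=\gamma_{ik}$, and every conjunct of $\varphi_i(\gamma_{ij}(X_i))$ a conjunct of $\varphi_j$; for every constant $c$ some $\varphi_i$ has a conjunct $x=c$ with $x\in X_i$; for every $F$, $i$,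 $(x_1,\dots,x_{n_F})\in X_i^{n_F}$ there is $j\ge i$ with a conjunct $F(\gamma_{ij}(x_1),\dots,\gamma_{ij}(x_{n_F}))=x_j$ in $\varphi_j$, $x_j\in X_j$. The limit algebra $L(\Lambda)$ has universe $\{(x,i):x\in X_i,i\in I\}/\!\equiv$, where $(x,i)\equiv(y,j)$ iff $\gamma_{ik}(x)=\gamma_{jk}(y)$ for some $k\ge i,j$; the constant $c$ is the class $\langle x,i\rangle$ of any $(x,i)$ with $x=c$ a conjunct of $\varphi_i$, and $F(\langle x_1,i_1\rangle,\dots,\langle x_{n_F},i_{n_F}\rangle)=\langle x_j,j\rangle$ for any $j\ge i_1,\dots,i_{n_F}$ such that $\varphi_j$ contains $F(\gamma_{i_1j}(x_1),\dots,\gamma_{i_{n_F}j}(x_{n_F}))=x_j$ (this is well defined). A formula $\varphi_i$ is realized in $\mathcal{B}$ if it is true in $\mathcal{B}$ under some assignment $X_i\to B$. *)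

theory Defs
  imports Main
begin

text \<open>A functional language L is given by a type 'f of operation symbols with
  arity function ar, and a type 'c of constant symbols.\<close>

type_synonym ('b,'f,'c) alg = "'b set \<times> ('f \<Rightarrow> 'b list \<Rightarrow> 'b) \<times> ('c \<Rightarrow> 'b)"

definition carr :: "('b,'f,'c) alg \<Rightarrow> 'b set" where "carr A = fst A"
definition opr :: "('b,'f,'c) alg \<Rightarrow> 'f \<Rightarrow> 'b list \<Rightarrow> 'b" where "opr A = fst (snd A)"
definition cst :: "('b,'f,'c) alg \<Rightarrow> 'c \<Rightarrow> 'b" where "cst A = snd (snd A)"

definition is_alg :: "('f \<Rightarrow> nat) \<Rightarrow> ('b,'f,'c) alg \<Rightarrow> bool" where
  "is_alg ar A \<longleftrightarrow> carr A \<noteq> {}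
     \<and> (\<forall>F xs. length xs = ar F \<and> set xs \<subseteq> carr A \<longrightarrow> opr A F xs \<in> carr A)
     \<and> (\<forall>c. cst A c \<in> carr A)"

definition alg_embedding ::
  "('f \<Rightarrow> nat) \<Rightarrow> ('a,'f,'c) alg \<Rightarrow> ('b,'f,'c) alg \<Rightarrow> ('a \<Rightarrow> 'b) \<Rightarrow> bool" where
  "alg_embedding ar A B h \<longleftrightarrow>
     (\<forall>x\<in>carr A. h x \<in> carr B) \<and> inj_on h (carr A)
     \<and> (\<forall>c. h (cst A c) = cst B c)
     \<and> (\<forall>F as. length as = ar F \<and> set as \<subseteq> carr A \<longrightarrow> h (opr A F as) = opr B F (map h as))"

text \<open>A literal is (True, a) for a, (False, a) for its negation; a conjunction of
  literals is represented by the (finite) set of its conjuncts.\<close>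

datatype ('f,'c,'v) atom = EqV 'v 'v | EqC 'v 'c | EqOp 'f "'v list" 'v

type_synonym ('f,'c,'v) lit = "bool \<times> ('f,'c,'v) atom"

fun atom_map :: "('v \<Rightarrow> 'w) \<Rightarrow> ('f,'c,'v) atom \<Rightarrow> ('f,'c,'w) atom" where
  "atom_map g (EqV x y) = EqV (g x) (g y)"
| "atom_map g (EqC x c) = EqC (g x) c"
| "atom_map g (EqOp F xs x) = EqOp F (map g xs) (g x)"

definition lit_map :: "('v \<Rightarrow> 'w) \<Rightarrow> ('f,'c,'v) lit \<Rightarrow> ('f,'c,'w) lit" where
  "lit_map g l = (fst l, atom_map g (snd l))"

fun atom_holds :: "('b,'f,'c) alg \<Rightarrow> ('v \<Rightarrow> 'b) \<Rightarrow> ('f,'c,'v) atom \<Rightarrow> bool" where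
  "atom_holds A s (EqV x y) \<longleftrightarrow> s x = s y"
| "atom_holds A s (EqC x c) \<longleftrightarrow> s x = cst A c"
| "atom_holds A s (EqOp F xs x) \<longleftrightarrow> opr A F (map s xs) = s x"

definition lit_holds :: "('b,'f,'c) alg \<Rightarrow> ('v \<Rightarrow> 'b) \<Rightarrow> ('f,'c,'v) lit \<Rightarrow> bool" where
  "lit_holds A s l \<longleftrightarrow> (atom_holds A s (snd l) \<longleftrightarrow> fst l)"

definition realized :: "('b,'f,'c) alg \<Rightarrow> 'v set \<Rightarrow> ('f,'c,'v) lit set \<Rightarrow> bool" where
  "realized A X phi \<longleftrightarrow> (\<exists>s. (\<forall>x\<in>X. s x \<in> carr A) \<and> (\<forall>l\<in>phi. lit_holds A s l))"

text \<open>Consistency: the formula has a model, i.e. is realized in some L-algebra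
  (by Loewenheim--Skolem a countable one suffices, so we take universes in nat).\<close>
definition consistent :: "('f \<Rightarrow> nat) \<Rightarrow> 'v set \<Rightarrow> ('f,'c,'v) lit set \<Rightarrow> bool" where
  "consistent ar X phi \<longleftrightarrow> (\<exists>A :: (nat,'f,'c) alg. is_alg ar A \<and> realized A X phi)"

fun atom_in :: "('f \<Rightarrow> nat) \<Rightarrow> 'f set \<Rightarrow> 'c set \<Rightarrow> 'v set \<Rightarrow> ('f,'c,'v) atom \<Rightarrow> bool" where
  "atom_in ar Fs Cs X (EqV x y) \<longleftrightarrow> x \<in> X \<and> y \<in> X"
| "atom_in ar Fs Cs X (EqC x c) \<longleftrightarrow> x \<in> X \<and> c \<in> Cs"
| "atom_in ar Fs Cs X (EqOp F xs x) \<longleftrightarrow> F \<in> Fs \<and> length xs = ar F \<and> set xs \<subseteq> X \<and> x \<in> X"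

definition diagram_formula ::
  "('f \<Rightarrow> nat) \<Rightarrow> 'f set \<Rightarrow> 'c set \<Rightarrow> 'v set \<Rightarrow> ('f,'c,'v) lit set \<Rightarrow> bool" where
  "diagram_formula ar Fs Cs X phi \<longleftrightarrow>
     finite Fs \<and> finite Cs \<and> finite X \<and> finite phi
     \<and> (\<forall>l\<in>phi. atom_in ar Fs Cs X (snd l))
     \<and> (\<forall>x\<in>X. \<forall>y\<in>X. x \<noteq> y \<longrightarrow> (False, EqV x y) \<in> phi)
     \<and> (\<forall>F\<in>Fs. \<forall>x0\<in>X. \<forall>xs. length xs = ar F \<and> set xs \<subseteq> X \<longrightarrow>
          ((True, EqOp F xs x0) \<in> phi \<longleftrightarrow> (False, EqOp F xs x0) \<notin> phi))
     \<and> (\<forall>c\<in>Cs. \<forall>x\<in>X. ((True, EqC x c) \<in> phi \<longleftrightarrow> (False, EqC x c) \<notin> phi))"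

definition direct_system ::
  "('f \<Rightarrow> nat) \<Rightarrow> 'i set \<Rightarrow> ('i \<Rightarrow> 'i \<Rightarrow> bool) \<Rightarrow> ('i \<Rightarrow> 'f set) \<Rightarrow> ('i \<Rightarrow> 'c set)
    \<Rightarrow> ('i \<Rightarrow> 'v set) \<Rightarrow> ('i \<Rightarrow> ('f,'c,'v) lit set) \<Rightarrow> ('i \<Rightarrow> 'i \<Rightarrow> 'v \<Rightarrow> 'v) \<Rightarrow> bool" where
  "direct_system ar I le Fs Cs X phi gam \<longleftrightarrow>
     \<comment> \<open>directed poset (directed sets are nonempty)\<close>
     I \<noteq> {}
     \<and> (\<forall>i\<in>I. le i i)
     \<and> (\<forall>i\<in>I. \<forall>j\<in>I. le i j \<and> le j i \<longrightarrow> i = j)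
     \<and> (\<forall>i\<in>I. \<forall>j\<in>I. \<forall>k\<in>I. le i j \<and> le j k \<longrightarrow> le i k)
     \<and> (\<forall>i\<in>I. \<forall>j\<in>I. \<exists>k\<in>I. le i k \<and> le j k)
     \<comment> \<open>consistent diagram-formulas\<close>
     \<and> (\<forall>i\<in>I. diagram_formula ar (Fs i) (Cs i) (X i) (phi i) \<and> consistent ar (X i) (phi i))
     \<comment> \<open>the maps gamma\<close>
     \<and> (\<forall>i\<in>I. \<forall>j\<in>I. le i j \<longrightarrow> (\<forall>x\<in>X i. gam i j x \<in> X j))
     \<and> (\<forall>i\<in>I. \<forall>x\<in>X i. gam i i x = x)
     \<and> (\<forall>i\<in>I. \<forall>j\<in>I. \<forall>k\<in>I. le i j \<and> le j k \<longrightarrow> (\<forall>x\<in>X i. gam j k (gam i j x) = gam i k x))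
     \<and> (\<forall>i\<in>I. \<forall>j\<in>I. le i j \<longrightarrow> lit_map (gam i j) ` phi i \<subseteq> phi j)
     \<comment> \<open>every constant is named\<close>
     \<and> (\<forall>c. \<exists>i\<in>I. \<exists>x\<in>X i. (True, EqC x c) \<in> phi i)
     \<comment> \<open>every operation is eventually defined\<close>
     \<and> (\<forall>F. \<forall>i\<in>I. \<forall>xs. length xs = ar F \<and> set xs \<subseteq> X i \<longrightarrow>
          (\<exists>j\<in>I. le i j \<and> (\<exists>x\<in>X j. (True, EqOp F (map (gam i j) xs) x) \<in> phi j)))"

definition limit_rel ::
  "'i set \<Rightarrow> ('i \<Rightarrow> 'i \<Rightarrow> bool) \<Rightarrow> ('i \<Rightarrow> 'v set) \<Rightarrow> ('i \<Rightarrow> 'i \<Rightarrow> 'v \<Rightarrow> 'v) \<Rightarrow> (('v \<times> 'i) \<times> ('v \<times> 'i)) set" where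
  "limit_rel I le X gam = {((x,i),(y,j)). i \<in> I \<and> j \<in> I \<and> x \<in> X i \<and> y \<in> X j \<and>
      (\<exists>k\<in>I. le i k \<and> le j k \<and> gam i k x = gam j k y)}"

definition limit_alg ::
  "'i set \<Rightarrow> ('i \<Rightarrow> 'i \<Rightarrow> bool) \<Rightarrow> ('i \<Rightarrow> 'v set) \<Rightarrow> ('i \<Rightarrow> ('f,'c,'v) lit set)
    \<Rightarrow> ('i \<Rightarrow> 'i \<Rightarrow> 'v \<Rightarrow> 'v) \<Rightarrow> (('v \<times> 'i) set,'f,'c) alg" where
  "limit_alg I le X phi gam =
    (let R = limit_rel I le X gam;
         rep = (\<lambda>a :: ('v \<times> 'i) set. SOME p. p \<in> a)
     in ({(x,i). i \<in> I \<and> x \<in> X i} // R,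
         (\<lambda>F as. R `` {SOME (x,j). j \<in> I \<and> x \<in> X j \<and> (\<forall>a\<in>set as. le (snd (rep a)) j)
                         \<and> (True, EqOp F (map (\<lambda>a. gam (snd (rep a)) j (fst (rep a))) as) x) \<in> phi j}),
         (\<lambda>c. R `` {SOME (x,i). i \<in> I \<and> x \<in> X i \<and> (True, EqC x c) \<in> phi i})))"

definition ultrafilter_on :: "'i set \<Rightarrow> 'i set set \<Rightarrow> bool" where
  "ultrafilter_on I D \<longleftrightarrow> D \<subseteq> Pow I \<and> I \<in> D \<and> {} \<notin> D
     \<and> (\<forall>A\<in>D. \<forall>B\<in>D. A \<inter> B \<in> D)
     \<and> (\<forall>A\<in>D. \<forall>B. A \<subseteq> B \<and> B \<subseteq> I \<longrightarrow> B \<in> D)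
     \<and> (\<forall>A. A \<subseteq> I \<longrightarrow> A \<in> D \<or> I - A \<in> D)"

definition ultra_rel :: "'i set \<Rightarrow> 'i set set \<Rightarrow> ('i \<Rightarrow> ('b,'f,'c) alg) \<Rightarrow> (('i \<Rightarrow> 'b) \<times> ('i \<Rightarrow> 'b)) set" where
  "ultra_rel I D B = {(f,g). (\<forall>i\<in>I. f i \<in> carr (B i)) \<and> (\<forall>i\<in>I. g i \<in> carr (B i))
                        \<and> {i \<in> I. f i = g i} \<in> D}"

definition ultraproduct :: "'i set \<Rightarrow> 'i set set \<Rightarrow> ('i \<Rightarrow> ('b,'f,'c) alg) \<Rightarrow> (('i \<Rightarrow> 'b) set,'f,'c) alg" where
  "ultraproduct I D B =
    (let R = ultra_rel I D B;
         rep = (\<lambda>a :: ('i \<Rightarrow> 'b) set. SOME f. f \<in> a)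
     in ({f. \<forall>i\<in>I. f i \<in> carr (B i)} // R,
         (\<lambda>F as. R `` {\<lambda>i. opr (B i) F (map (\<lambda>a. rep a i) as)}),
         (\<lambda>c. R `` {\<lambda>i. cst (B i) c})))"

end

theory Submission
  imports Defs
begin

text \<open>Realize every phi i in B i by an assignment s i. An element of the limit algebra, represented
  by x at stage i, is sent to the class of its thread k \<mapsto> s k (gam i k x), which is defined on
  the cone above i. Take an ultrafilter D containing all cones, which exists because the index set
  is directed. Every literal of phi i is transported to all later stages, so two threads, or a
  thread and the pointwise value of an operation or constant, agree on a cone, hence modulo D,
  exactly when they should; injectivity comes from the negated equalities x \<noteq> y of the diagrams.\<close>

section \<open>Filters and ultrafilters\<close>

definition proper_filter_on :: "'i set \<Rightarrow> 'i set set \<Rightarrow> bool" where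
  "proper_filter_on I F \<longleftrightarrow> F \<subseteq> Pow I \<and> I \<in> F \<and> {} \<notin> F
     \<and> (\<forall>A\<in>F. \<forall>B\<in>F. A \<inter> B \<in> F) \<and> (\<forall>A\<in>F. \<forall>B. A \<subseteq> B \<and> B \<subseteq> I \<longrightarrow> B \<in> F)"

lemma ultrafilter_on_iff:
  "ultrafilter_on I D \<longleftrightarrow> proper_filter_on I D \<and> (\<forall>A. A \<subseteq> I \<longrightarrow> A \<in> D \<or> I - A \<in> D)"
  unfolding ultrafilter_on_def proper_filter_on_def by (simp only: conj_assoc)

lemma proper_filter_onI:
  assumes "F \<subseteq> Pow I" "I \<in> F" "{} \<notin> F"
    and "\<And>A B. A \<in> F \<Longrightarrow> B \<in> F \<Longrightarrow> A \<inter> B \<in> F"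
    and "\<And>A B. A \<in> F \<Longrightarrow> A \<subseteq> B \<Longrightarrow> B \<subseteq> I \<Longrightarrow> B \<in> F"
  shows "proper_filter_on I F"
  using assms unfolding proper_filter_on_def by blast

lemma
  assumes "proper_filter_on I F"
  shows proper_filter_on_Pow: "F \<subseteq> Pow I"
    and proper_filter_on_top: "I \<in> F"
    and proper_filter_on_empty: "{} \<notin> F"
    and proper_filter_on_Int: "A \<in> F \<Longrightarrow> B \<in> F \<Longrightarrow> A \<inter> B \<in> F"
    and proper_filter_on_mono: "A \<in> F \<Longrightarrow> A \<subseteq> B \<Longrightarrow> B \<subseteq> I \<Longrightarrow> B \<in> F"
  using assms unfolding proper_filter_on_def by blast+

lemma proper_filter_on_witness:
  assumes "proper_filter_on I F" "{k\<in>I. P k} \<in> F"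
  shows "\<exists>k\<in>I. P k"
proof (rule ccontr)
  assume "\<not> (\<exists>k\<in>I. P k)"
  then have "{k\<in>I. P k} = {}" by blast
  with assms show False using proper_filter_on_empty by metis
qed

lemma proper_filter_on_conj:
  assumes "proper_filter_on I F" "{k\<in>I. P k} \<in> F" "{k\<in>I. Q k} \<in> F"
  shows "{k\<in>I. P k \<and> Q k} \<in> F"
proof -
  have "{k\<in>I. P k} \<inter> {k\<in>I. Q k} \<in> F" by (rule proper_filter_on_Int[OF assms])
  moreover have "{k\<in>I. P k} \<inter> {k\<in>I. Q k} = {k\<in>I. P k \<and> Q k}" by blast
  ultimately show ?thesis by simp
qed

lemma proper_filter_on_mono_pred:
  assumes "proper_filter_on I F" "{k\<in>I. P k} \<in> F" "\<And>k. k \<in> I \<Longrightarrow> P k \<Longrightarrow> Q k"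
  shows "{k\<in>I. Q k} \<in> F"
  by (rule proper_filter_on_mono[OF assms(1,2)]) (use assms(3) in auto)

lemma proper_filter_on_list_all:
  assumes "proper_filter_on I F" "\<And>a. a \<in> set as \<Longrightarrow> {k\<in>I. P a k} \<in> F"
  shows "{k\<in>I. \<forall>a\<in>set as. P a k} \<in> F"
  using assms(2)
proof (induction as)
  case Nil
  then show ?case using proper_filter_on_top[OF assms(1)] by simp
next
  case (Cons a as)
  have "{k\<in>I. P a k \<and> (\<forall>a\<in>set as. P a k)} \<in> F"
    using Cons by (intro proper_filter_on_conj[OF assms(1)]) auto
  then show ?case by simp
qed

definition filter_base :: "'i set \<Rightarrow> 'i set set \<Rightarrow> bool" where
  "filter_base I S \<longleftrightarrow> S \<subseteq> Pow I \<and> S \<noteq> {} \<and> {} \<notin> S \<and> (\<forall>A\<in>S. \<forall>B\<in>S. \<exists>C\<in>S. C \<subseteq> A \<inter> B)"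

lemma
  assumes "filter_base I S"
  shows filter_base_Pow: "S \<subseteq> Pow I"
    and filter_base_nonempty: "S \<noteq> {}"
    and filter_base_empty: "{} \<notin> S"
    and filter_base_directed: "A \<in> S \<Longrightarrow> B \<in> S \<Longrightarrow> \<exists>C\<in>S. C \<subseteq> A \<inter> B"
  using assms unfolding filter_base_def by blast+

definition up_closure :: "'i set \<Rightarrow> 'i set set \<Rightarrow> 'i set set" where
  "up_closure I S = {A. A \<subseteq> I \<and> (\<exists>C\<in>S. C \<subseteq> A)}"

lemma up_closure_superset: "S \<subseteq> Pow I \<Longrightarrow> S \<subseteq> up_closure I S"
  unfolding up_closure_def by blast

lemma proper_filter_on_up_closure:
  assumes S: "filter_base I S"
  shows "proper_filter_on I (up_closure I S)"
proof (rule proper_filter_onI)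
  show "up_closure I S \<subseteq> Pow I" unfolding up_closure_def by blast
  obtain C where "C \<in> S" using filter_base_nonempty[OF S] by blast
  then show "I \<in> up_closure I S" using filter_base_Pow[OF S] unfolding up_closure_def by blast
  show "{} \<notin> up_closure I S" using filter_base_empty[OF S] by (simp add: up_closure_def)
next
  fix A B assume A: "A \<in> up_closure I S" and B: "B \<in> up_closure I S"
  obtain C where "C \<in> S" "C \<subseteq> A" "A \<subseteq> I" using A unfolding up_closure_def by blast
  moreover obtain C' where "C' \<in> S" "C' \<subseteq> B" using B unfolding up_closure_def by blast
  moreover obtain E where "E \<in> S" "E \<subseteq> C \<inter> C'"
    using filter_base_directed[OF S \<open>C \<in> S\<close> \<open>C' \<in> S\<close>] by blast
  ultimately have "E \<in> S" "E \<subseteq> A \<inter> B" "A \<inter> B \<subseteq> I" by blast+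
  then show "A \<inter> B \<in> up_closure I S" unfolding up_closure_def by blast
next
  fix A B assume "A \<in> up_closure I S" "A \<subseteq> B" "B \<subseteq> I"
  then show "B \<in> up_closure I S" unfolding up_closure_def by blast
qed

lemma proper_filter_on_Union_chain:
  assumes "C \<in> chains {F. proper_filter_on I F}" and "C \<noteq> {}"
  shows "proper_filter_on I (\<Union>C)"
proof -
  have filt: "\<And>F. F \<in> C \<Longrightarrow> proper_filter_on I F"
    using assms(1) unfolding chains_def by blast
  have comp: "\<And>F G. F \<in> C \<Longrightarrow> G \<in> C \<Longrightarrow> F \<subseteq> G \<or> G \<subseteq> F"
    using assms(1) unfolding chains_def chain_subset_def by blast
  obtain F0 where "F0 \<in> C" using assms(2) by blast
  show ?thesis
  proof (rule proper_filter_onI)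
    show "\<Union>C \<subseteq> Pow I" using proper_filter_on_Pow[OF filt] by blast
    show "I \<in> \<Union>C" using proper_filter_on_top[OF filt[OF \<open>F0 \<in> C\<close>]] \<open>F0 \<in> C\<close> by blast
    show "{} \<notin> \<Union>C" using proper_filter_on_empty[OF filt] by blast
  next
    fix A B assume "A \<in> \<Union>C" "B \<in> \<Union>C"
    then obtain F G where FG: "F \<in> C" "G \<in> C" "A \<in> F" "B \<in> G" by blast
    from comp[OF FG(1,2)] show "A \<inter> B \<in> \<Union>C"
    proof
      assume "F \<subseteq> G"
      then have "A \<inter> B \<in> G" using proper_filter_on_Int[OF filt[OF FG(2)]] FG by blast
      then show ?thesis using FG by blast
    next
      assume "G \<subseteq> F"
      then have "A \<inter> B \<in> F" using proper_filter_on_Int[OF filt[OF FG(1)]] FG by blast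
      then show ?thesis using FG by blast
    qed
  next
    fix A B assume "A \<in> \<Union>C" "A \<subseteq> B" "B \<subseteq> I"
    moreover from this obtain F where "F \<in> C" "A \<in> F" by blast
    ultimately show "B \<in> \<Union>C" using proper_filter_on_mono[OF filt] by blast
  qed
qed

lemma proper_filter_on_adjoin:
  assumes M: "proper_filter_on I M" and A: "A \<subseteq> I" and meets: "\<And>C. C \<in> M \<Longrightarrow> C \<inter> A \<noteq> {}"
  shows "proper_filter_on I (up_closure I ((\<lambda>C. C \<inter> A) ` M))"
    and "M \<subseteq> up_closure I ((\<lambda>C. C \<inter> A) ` M)"
    and "A \<in> up_closure I ((\<lambda>C. C \<inter> A) ` M)"
proof -
  let ?S = "(\<lambda>C. C \<inter> A) ` M"
  have "\<exists>E\<in>?S. E \<subseteq> C \<inter> C'" if CC: "C \<in> ?S" "C' \<in> ?S" for C C'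
  proof -
    obtain C1 C2 where C12: "C1 \<in> M" "C2 \<in> M" "C = C1 \<inter> A" "C' = C2 \<inter> A"
      using CC by blast
    then have "(C1 \<inter> C2) \<inter> A \<in> ?S" using proper_filter_on_Int[OF M] by blast
    moreover have "(C1 \<inter> C2) \<inter> A \<subseteq> C \<inter> C'" using C12 by blast
    ultimately show ?thesis by blast
  qed
  moreover have "?S \<subseteq> Pow I" using proper_filter_on_Pow[OF M] by blast
  moreover have "?S \<noteq> {}" using proper_filter_on_top[OF M] by blast
  moreover have "{} \<notin> ?S" using meets by blast
  ultimately have "filter_base I ?S" unfolding filter_base_def by blast
  then show "proper_filter_on I (up_closure I ?S)" by (rule proper_filter_on_up_closure)
  show "M \<subseteq> up_closure I ?S"
  proof
    fix C assume "C \<in> M"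
    then have "C \<inter> A \<in> ?S" "C \<inter> A \<subseteq> C" "C \<subseteq> I" using proper_filter_on_Pow[OF M] by blast+
    then show "C \<in> up_closure I ?S" unfolding up_closure_def by blast
  qed
  have "I \<inter> A \<in> ?S" using proper_filter_on_top[OF M] by blast
  then show "A \<in> up_closure I ?S" using A unfolding up_closure_def by blast
qed

lemma maximal_proper_filter_is_ultrafilter:
  assumes M: "proper_filter_on I M"
    and maximal: "\<And>F. proper_filter_on I F \<Longrightarrow> M \<subseteq> F \<Longrightarrow> F = M"
  shows "ultrafilter_on I M"
proof -
  have dichotomy: "A \<in> M \<or> I - A \<in> M" if A: "A \<subseteq> I" for A
  proof (cases "\<exists>C\<in>M. C \<inter> A = {}")
    case True
    then obtain C where "C \<in> M" "C \<inter> A = {}" by blast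
    moreover have "C \<subseteq> I" using \<open>C \<in> M\<close> proper_filter_on_Pow[OF M] by blast
    ultimately have "C \<in> M" "C \<subseteq> I - A" by blast+
    then show ?thesis using proper_filter_on_mono[OF M] by blast
  next
    case False
    then have meets: "C \<inter> A \<noteq> {}" if "C \<in> M" for C using that by blast
    note adjoin = proper_filter_on_adjoin[OF M A meets]
    have "up_closure I ((\<lambda>C. C \<inter> A) ` M) = M" using maximal[OF adjoin(1,2)] .
    then show ?thesis using adjoin(3) by simp
  qed
  show ?thesis unfolding ultrafilter_on_iff using M dichotomy by simp
qed

lemma filter_base_ultrafilter_extension:
  assumes S: "filter_base I S"
  shows "\<exists>D. ultrafilter_on I D \<and> S \<subseteq> D"
proof -
  let ?P = "{F. proper_filter_on I F \<and> S \<subseteq> F}"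
  have "\<exists>U\<in>?P. \<forall>F\<in>C. F \<subseteq> U" if C: "C \<in> chains ?P" for C
  proof (cases "C = {}")
    case True
    have "up_closure I S \<in> ?P"
      using proper_filter_on_up_closure[OF S] up_closure_superset[OF filter_base_Pow[OF S]] by simp
    then show ?thesis using True by auto
  next
    case False
    have CP: "C \<subseteq> ?P" using C unfolding chains_def by simp
    have "C \<in> chains {F. proper_filter_on I F}" using C CP unfolding chains_def by auto
    then have "proper_filter_on I (\<Union>C)" using False by (rule proper_filter_on_Union_chain)
    moreover have "S \<subseteq> \<Union>C"
    proof -
      obtain F0 where "F0 \<in> C" using False by blast
      then have "S \<subseteq> F0" using CP by blast
      also have "F0 \<subseteq> \<Union>C" using \<open>F0 \<in> C\<close> by (rule Union_upper)
      finally show ?thesis .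
    qed
    ultimately show ?thesis by blast
  qed
  then have "\<exists>M\<in>?P. \<forall>F\<in>?P. M \<subseteq> F \<longrightarrow> F = M" by (intro Zorn_Lemma2 ballI)
  then obtain M where M: "M \<in> ?P" and maximal: "\<forall>F\<in>?P. M \<subseteq> F \<longrightarrow> F = M"
    by blast
  have "ultrafilter_on I M"
  proof (rule maximal_proper_filter_is_ultrafilter)
    show "proper_filter_on I M" using M by simp
    show "F = M" if "proper_filter_on I F" "M \<subseteq> F" for F
    proof -
      have "S \<subseteq> M" using M by simp
      also note \<open>M \<subseteq> F\<close>
      finally have "F \<in> ?P" using that by simp
      with \<open>M \<subseteq> F\<close> show ?thesis using maximal by blast
    qed
  qed
  with M show ?thesis by blast
qed

lemma directed_cones_ultrafilter:
  assumes "I \<noteq> {}" and "\<And>i. i \<in> I \<Longrightarrow> le i i"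
    and "\<And>i j k. i \<in> I \<Longrightarrow> j \<in> I \<Longrightarrow> k \<in> I \<Longrightarrow> le i j \<Longrightarrow> le j k \<Longrightarrow> le i k"
    and "\<And>i j. i \<in> I \<Longrightarrow> j \<in> I \<Longrightarrow> \<exists>k\<in>I. le i k \<and> le j k"
  shows "\<exists>D. ultrafilter_on I D \<and> (\<forall>i\<in>I. {k\<in>I. le i k} \<in> D)"
proof -
  let ?cone = "\<lambda>i. {k\<in>I. le i k}"
  have "\<exists>C\<in>?cone ` I. C \<subseteq> A \<inter> B" if AB: "A \<in> ?cone ` I" "B \<in> ?cone ` I" for A B
  proof -
    obtain i j where ij: "i \<in> I" "j \<in> I" "A = ?cone i" "B = ?cone j" using AB by blast
    then obtain k where k: "k \<in> I" "le i k" "le j k" using assms(4) by blast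
    have "?cone k \<subseteq> A \<inter> B"
    proof
      fix l assume "l \<in> ?cone k"
      then have "l \<in> I" "le k l" by auto
      then show "l \<in> A \<inter> B" using assms(3)[of _ k l] ij k by blast
    qed
    with \<open>k \<in> I\<close> show ?thesis by blast
  qed
  moreover have "{} \<notin> ?cone ` I"
  proof
    assume "{} \<in> ?cone ` I"
    then obtain i where "i \<in> I" "?cone i = {}" by auto
    with assms(2) show False by auto
  qed
  moreover have "?cone ` I \<subseteq> Pow I" "?cone ` I \<noteq> {}" using assms(1) by auto
  ultimately have "filter_base I (?cone ` I)" unfolding filter_base_def by blast
  then obtain D where "ultrafilter_on I D" "?cone ` I \<subseteq> D"
    using filter_base_ultrafilter_extension by blast
  then show ?thesis by auto
qed

section \<open>Quotients, ultraproducts and limit algebras\<close>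

lemma is_alg_opr_closed:
  "is_alg ar A \<Longrightarrow> length xs = ar F \<Longrightarrow> set xs \<subseteq> carr A \<Longrightarrow> opr A F xs \<in> carr A"
  unfolding is_alg_def by blast

lemma is_alg_cst_closed: "is_alg ar A \<Longrightarrow> cst A c \<in> carr A"
  unfolding is_alg_def by blast

lemma is_alg_carr_nonempty: "is_alg ar A \<Longrightarrow> carr A \<noteq> {}"
  unfolding is_alg_def by blast

lemma equiv_some_elem_class:
  assumes "equiv A r" "x \<in> A"
  shows "(x, some_elem (r``{x})) \<in> r"
proof -
  have "x \<in> r``{x}" by (rule equiv_class_self[OF assms])
  then have "some_elem (r``{x}) \<in> r``{x}" unfolding some_elem_def by (rule someI)
  then show ?thesis by simp
qed

lemma quotient_some_elem:
  assumes "equiv A r" "a \<in> A//r"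
  shows "some_elem a \<in> A" and "a = r``{some_elem a}"
proof -
  obtain x where x: "a = r``{x}" "x \<in> A" using assms(2) by (rule quotientE)
  then have xr: "(x, some_elem a) \<in> r" using equiv_some_elem_class[OF assms(1)] by simp
  then show "some_elem a \<in> A" using equiv_type[OF assms(1)] by blast
  show "a = r``{some_elem a}" using x(1) equiv_class_eq[OF assms(1) xr] by simp
qed

definition product_carrier :: "'i set \<Rightarrow> ('i \<Rightarrow> ('b,'f,'c) alg) \<Rightarrow> ('i \<Rightarrow> 'b) set" where
  "product_carrier I B = {f. \<forall>i\<in>I. f i \<in> carr (B i)}"

lemma ultra_rel_iff:
  "(f, g) \<in> ultra_rel I D B \<longleftrightarrow>
     f \<in> product_carrier I B \<and> g \<in> product_carrier I B \<and> {i\<in>I. f i = g i} \<in> D"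
  by (simp add: ultra_rel_def product_carrier_def)

lemma equiv_ultra_rel:
  assumes D: "proper_filter_on I D"
  shows "equiv (product_carrier I B) (ultra_rel I D B)"
proof (rule equivI)
  show "ultra_rel I D B \<subseteq> product_carrier I B \<times> product_carrier I B"
    by (auto simp: ultra_rel_iff)
  show "refl_on (product_carrier I B) (ultra_rel I D B)"
    using proper_filter_on_top[OF D] by (auto simp: refl_on_def ultra_rel_iff)
  show "sym (ultra_rel I D B)"
    by (rule symI) (simp add: ultra_rel_iff eq_commute)
  show "trans (ultra_rel I D B)"
  proof (rule transI)
    fix f g h assume "(f, g) \<in> ultra_rel I D B" "(g, h) \<in> ultra_rel I D B"
    then have "{i\<in>I. f i = g i \<and> g i = h i} \<in> D" "f \<in> product_carrier I B" "h \<in> product_carrier I B"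
      by (auto simp: ultra_rel_iff intro: proper_filter_on_conj[OF D])
    then show "(f, h) \<in> ultra_rel I D B"
      unfolding ultra_rel_iff using proper_filter_on_mono_pred[OF D] by auto
  qed
qed

lemma carr_ultraproduct: "carr (ultraproduct I D B) = product_carrier I B // ultra_rel I D B"
  unfolding ultraproduct_def Let_def carr_def product_carrier_def by simp

lemma cst_ultraproduct: "cst (ultraproduct I D B) c = ultra_rel I D B `` {\<lambda>i. cst (B i) c}"
  unfolding ultraproduct_def Let_def cst_def by simp

lemma opr_ultraproduct:
  "opr (ultraproduct I D B) F bs = ultra_rel I D B `` {\<lambda>i. opr (B i) F (map (\<lambda>b. some_elem b i) bs)}"
  unfolding ultraproduct_def Let_def opr_def some_elem_def by simp

lemma opr_representatives_in_product:
  assumes D: "proper_filter_on I D" and B: "\<And>i. i \<in> I \<Longrightarrow> is_alg ar (B i)"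
    and len: "length bs = ar F" and bs: "set bs \<subseteq> carr (ultraproduct I D B)"
  shows "(\<lambda>i. opr (B i) F (map (\<lambda>b. some_elem b i) bs)) \<in> product_carrier I B"
proof -
  have "some_elem b \<in> product_carrier I B" if "b \<in> set bs" for b
    using quotient_some_elem(1)[OF equiv_ultra_rel[OF D]] bs that
    unfolding carr_ultraproduct by blast
  then have "set (map (\<lambda>b. some_elem b i) bs) \<subseteq> carr (B i)" if "i \<in> I" for i
    using that unfolding product_carrier_def by auto
  then show ?thesis
    using is_alg_opr_closed[OF B] len unfolding product_carrier_def by simp
qed

lemma carr_limit_alg:
  "carr (limit_alg I le X phi gam) = {(x, i). i \<in> I \<and> x \<in> X i} // limit_rel I le X gam"
  unfolding limit_alg_def Let_def carr_def by simp

lemma cst_limit_alg: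
  "cst (limit_alg I le X phi gam) c =
     limit_rel I le X gam `` {SOME (x, i). i \<in> I \<and> x \<in> X i \<and> (True, EqC x c) \<in> phi i}"
  unfolding limit_alg_def Let_def cst_def by simp

lemma opr_limit_alg:
  "opr (limit_alg I le X phi gam) F as =
     limit_rel I le X gam `` {SOME (x, j). j \<in> I \<and> x \<in> X j \<and> (\<forall>a\<in>set as. le (snd (some_elem a)) j)
       \<and> (True, EqOp F (map (\<lambda>a. gam (snd (some_elem a)) j (fst (some_elem a))) as) x) \<in> phi j}"
  unfolding limit_alg_def Let_def opr_def some_elem_def by simp

lemma limit_rel_iff:
  "((x, i), (y, j)) \<in> limit_rel I le X gam \<longleftrightarrow> i \<in> I \<and> j \<in> I \<and> x \<in> X i \<and> y \<in> X j
     \<and> (\<exists>k\<in>I. le i k \<and> le j k \<and> gam i k x = gam j k y)"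
  by (simp add: limit_rel_def)

section \<open>Direct systems\<close>

locale direct_sys =
  fixes ar :: "'f \<Rightarrow> nat"
    and I :: "'i set" and le :: "'i \<Rightarrow> 'i \<Rightarrow> bool"
    and X :: "'i \<Rightarrow> 'v set" and phi :: "'i \<Rightarrow> ('f,'c,'v) lit set"
    and gam :: "'i \<Rightarrow> 'i \<Rightarrow> 'v \<Rightarrow> 'v"
  assumes index_nonempty: "I \<noteq> {}"
    and index_refl: "\<And>i. i \<in> I \<Longrightarrow> le i i"
    and index_trans: "\<And>i j k. i \<in> I \<Longrightarrow> j \<in> I \<Longrightarrow> k \<in> I \<Longrightarrow> le i j \<Longrightarrow> le j k \<Longrightarrow> le i k"
    and index_directed: "\<And>i j. i \<in> I \<Longrightarrow> j \<in> I \<Longrightarrow> \<exists>k\<in>I. le i k \<and> le j k"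
    and distinct_vars:
      "\<And>i x y. i \<in> I \<Longrightarrow> x \<in> X i \<Longrightarrow> y \<in> X i \<Longrightarrow> x \<noteq> y \<Longrightarrow> (False, EqV x y) \<in> phi i"
    and gam_X: "\<And>i j x. i \<in> I \<Longrightarrow> j \<in> I \<Longrightarrow> le i j \<Longrightarrow> x \<in> X i \<Longrightarrow> gam i j x \<in> X j"
    and gam_comp: "\<And>i j k x. i \<in> I \<Longrightarrow> j \<in> I \<Longrightarrow> k \<in> I \<Longrightarrow> le i j \<Longrightarrow> le j k \<Longrightarrow> x \<in> X i
      \<Longrightarrow> gam j k (gam i j x) = gam i k x"
    and gam_phi:
      "\<And>i j l. i \<in> I \<Longrightarrow> j \<in> I \<Longrightarrow> le i j \<Longrightarrow> l \<in> phi i \<Longrightarrow> lit_map (gam i j) l \<in> phi j"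
    and constants_named: "\<And>c. \<exists>i\<in>I. \<exists>x\<in>X i. (True, EqC x c) \<in> phi i"
    and operations_defined: "\<And>F i xs. i \<in> I \<Longrightarrow> length xs = ar F \<Longrightarrow> set xs \<subseteq> X i
      \<Longrightarrow> \<exists>j\<in>I. le i j \<and> (\<exists>x\<in>X j. (True, EqOp F (map (gam i j) xs) x) \<in> phi j)"

lemma direct_system_imp_direct_sys:
  assumes "direct_system ar I le Fs Cs X phi gam"
  shows "direct_sys ar I le X phi gam"
proof -
  have ne: "I \<noteq> {}"
    and refl: "\<forall>i\<in>I. le i i"
    and trans: "\<forall>i\<in>I. \<forall>j\<in>I. \<forall>k\<in>I. le i j \<and> le j k \<longrightarrow> le i k"
    and dir: "\<forall>i\<in>I. \<forall>j\<in>I. \<exists>k\<in>I. le i k \<and> le j k"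
    and gX: "\<forall>i\<in>I. \<forall>j\<in>I. le i j \<longrightarrow> (\<forall>x\<in>X i. gam i j x \<in> X j)"
    and gc: "\<forall>i\<in>I. \<forall>j\<in>I. \<forall>k\<in>I. le i j \<and> le j k \<longrightarrow> (\<forall>x\<in>X i. gam j k (gam i j x) = gam i k x)"
    and gphi: "\<forall>i\<in>I. \<forall>j\<in>I. le i j \<longrightarrow> lit_map (gam i j) ` phi i \<subseteq> phi j"
    and cn: "\<forall>c. \<exists>i\<in>I. \<exists>x\<in>X i. (True, EqC x c) \<in> phi i"
    and od: "\<forall>F. \<forall>i\<in>I. \<forall>xs. length xs = ar F \<and> set xs \<subseteq> X i \<longrightarrow>
          (\<exists>j\<in>I. le i j \<and> (\<exists>x\<in>X j. (True, EqOp F (map (gam i j) xs) x) \<in> phi j))"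
    using assms unfolding direct_system_def by - (elim conjE; assumption)+
  have "\<forall>i\<in>I. diagram_formula ar (Fs i) (Cs i) (X i) (phi i)"
    using assms unfolding direct_system_def by (elim conjE) fast
  then have dv: "\<forall>i\<in>I. \<forall>x\<in>X i. \<forall>y\<in>X i. x \<noteq> y \<longrightarrow> (False, EqV x y) \<in> phi i"
    unfolding diagram_formula_def by blast
  show ?thesis
  proof
    show "I \<noteq> {}" by (fact ne)
    show "le i i" if "i \<in> I" for i using refl that by blast
    show "le i k" if "i \<in> I" "j \<in> I" "k \<in> I" "le i j" "le j k" for i j k
      using trans that by blast
    show "\<exists>k\<in>I. le i k \<and> le j k" if "i \<in> I" "j \<in> I" for i j using dir that by blast
    show "(False, EqV x y) \<in> phi i" if "i \<in> I" "x \<in> X i" "y \<in> X i" "x \<noteq> y" for i x y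
      using dv that by blast
    show "gam i j x \<in> X j" if "i \<in> I" "j \<in> I" "le i j" "x \<in> X i" for i j x
      using gX that by blast
    show "gam j k (gam i j x) = gam i k x"
      if "i \<in> I" "j \<in> I" "k \<in> I" "le i j" "le j k" "x \<in> X i" for i j k x
      using gc that by blast
    show "lit_map (gam i j) l \<in> phi j" if "i \<in> I" "j \<in> I" "le i j" "l \<in> phi i" for i j l
      using gphi that by blast
    show "\<exists>i\<in>I. \<exists>x\<in>X i. (True, EqC x c) \<in> phi i" for c using cn by blast
    show "\<exists>j\<in>I. le i j \<and> (\<exists>x\<in>X j. (True, EqOp F (map (gam i j) xs) x) \<in> phi j)"
      if "i \<in> I" "length xs = ar F" "set xs \<subseteq> X i" for F i xs
      using od that by blast
  qed
qed

context direct_sys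
begin

abbreviation points :: "('v \<times> 'i) set" where
  "points \<equiv> {(x, i). i \<in> I \<and> x \<in> X i}"

lemma mem_points_iff: "p \<in> points \<longleftrightarrow> snd p \<in> I \<and> fst p \<in> X (snd p)"
  by (cases p) simp

lemma upper_bound_list: "set js \<subseteq> I \<Longrightarrow> \<exists>k\<in>I. \<forall>j\<in>set js. le j k"
proof (induction js)
  case Nil
  then show ?case using index_nonempty by auto
next
  case (Cons j js)
  then have "j \<in> I" "set js \<subseteq> I" by simp_all
  then obtain i where i: "i \<in> I" "\<forall>j'\<in>set js. le j' i" using Cons.IH by blast
  obtain k where k: "k \<in> I" "le j k" "le i k" using index_directed \<open>j \<in> I\<close> i(1) by blast
  have "le j' k" if "j' \<in> set js" for j'
    using index_trans[of j' i k] i k that \<open>set js \<subseteq> I\<close> by blast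
  then have "\<forall>j'\<in>set (j # js). le j' k" using k(2) by simp
  then show ?case using k(1) by blast
qed

lemma gam_agree_above:
  assumes "i \<in> I" "j \<in> I" "k0 \<in> I" "k \<in> I" "le i k0" "le j k0" "le k0 k" "x \<in> X i" "y \<in> X j"
    and "gam i k0 x = gam j k0 y"
  shows "gam i k x = gam j k y"
proof -
  have "gam i k x = gam k0 k (gam i k0 x)" using gam_comp[of i k0 k x] assms by simp
  also have "\<dots> = gam k0 k (gam j k0 y)" using assms(10) by simp
  also have "\<dots> = gam j k y" using gam_comp[of j k0 k y] assms by simp
  finally show ?thesis .
qed

lemma operation_defined_above:
  assumes ps: "set ps \<subseteq> points" and len: "length ps = ar F"
  shows "\<exists>x j. j \<in> I \<and> x \<in> X j \<and> (\<forall>p\<in>set ps. le (snd p) j)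
           \<and> (True, EqOp F (map (\<lambda>p. gam (snd p) j (fst p)) ps) x) \<in> phi j"
proof -
  have pt: "snd p \<in> I" "fst p \<in> X (snd p)" if "p \<in> set ps" for p
    using ps that mem_points_iff by blast+
  then have "set (map snd ps) \<subseteq> I" by auto
  from upper_bound_list[OF this]
  obtain i where i: "i \<in> I" "\<forall>p\<in>set ps. le (snd p) i" by auto
  let ?xs = "map (\<lambda>p. gam (snd p) i (fst p)) ps"
  have "set ?xs \<subseteq> X i"
  proof
    fix y assume "y \<in> set ?xs"
    then obtain p where p: "p \<in> set ps" "y = gam (snd p) i (fst p)" by auto
    show "y \<in> X i" unfolding p(2) by (rule gam_X) (use pt[OF p(1)] i p(1) in auto)
  qed
  moreover have "length ?xs = ar F" using len by simp
  ultimately obtain j x where j: "j \<in> I" "le i j" "x \<in> X j"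
    "(True, EqOp F (map (gam i j) ?xs) x) \<in> phi j"
    using operations_defined[of i ?xs F] i(1) by blast
  have "gam i j (gam (snd p) i (fst p)) = gam (snd p) j (fst p)" if "p \<in> set ps" for p
    by (rule gam_comp) (use pt[OF that] i j that in auto)
  then have "map (gam i j) ?xs = map (\<lambda>p. gam (snd p) j (fst p)) ps" by simp
  note lit = j(4)[unfolded this]
  have "le (snd p) j" if "p \<in> set ps" for p
    using index_trans[of "snd p" i j] pt[OF that] i j that by blast
  with j(1,3) lit show ?thesis by blast
qed

lemma limit_rel_trans:
  assumes pq: "(p, q) \<in> limit_rel I le X gam" and qr: "(q, r) \<in> limit_rel I le X gam"
  shows "(p, r) \<in> limit_rel I le X gam"
proof -
  obtain x i y j z l where pqr: "p = (x, i)" "q = (y, j)" "r = (z, l)" by (metis prod.exhaust)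
  obtain k1 where k1: "i \<in> I" "j \<in> I" "x \<in> X i" "y \<in> X j" "k1 \<in> I" "le i k1" "le j k1"
    "gam i k1 x = gam j k1 y"
    using pq unfolding pqr limit_rel_iff by blast
  obtain k2 where k2: "l \<in> I" "z \<in> X l" "k2 \<in> I" "le j k2" "le l k2" "gam j k2 y = gam l k2 z"
    using qr unfolding pqr limit_rel_iff by blast
  obtain k where k: "k \<in> I" "le k1 k" "le k2 k" using index_directed k1(5) k2(3) by blast
  have "le i k" "le l k"
    using index_trans[of i k1 k] index_trans[of l k2 k] k1 k2 k by blast+
  moreover have "gam i k x = gam j k y"
    by (rule gam_agree_above[of i j k1 k x y]) (use k1 k in blast)+
  moreover have "gam j k y = gam l k z"
    by (rule gam_agree_above[of j l k2 k y z]) (use k1 k2 k in blast)+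
  ultimately show ?thesis
    unfolding pqr limit_rel_iff using k1(1,3) k2(1,2) k(1) by auto
qed

lemma equiv_limit_rel: "equiv points (limit_rel I le X gam)"
proof (rule equivI)
  show "limit_rel I le X gam \<subseteq> points \<times> points"
    unfolding limit_rel_def by auto
  show "refl_on points (limit_rel I le X gam)"
  proof (rule refl_onI)
    fix p assume "p \<in> points"
    then obtain x i where p: "p = (x, i)" "i \<in> I" "x \<in> X i" by blast
    moreover have "le i i" using index_refl \<open>i \<in> I\<close> .
    ultimately show "(p, p) \<in> limit_rel I le X gam" unfolding p(1) limit_rel_iff by blast
  qed
  show "sym (limit_rel I le X gam)"
  proof (rule symI)
    fix p q assume "(p, q) \<in> limit_rel I le X gam"
    then show "(q, p) \<in> limit_rel I le X gam" unfolding limit_rel_def by auto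
  qed
  show "trans (limit_rel I le X gam)" by (rule transI) (rule limit_rel_trans)
qed

abbreviation lim :: "(('v \<times> 'i) set,'f,'c) alg" where
  "lim \<equiv> limit_alg I le X phi gam"

lemma some_elem_lim_carr: "a \<in> carr lim \<Longrightarrow> some_elem a \<in> points"
  unfolding carr_limit_alg by (rule quotient_some_elem(1)[OF equiv_limit_rel])

lemma some_elem_list_points:
  assumes "set as \<subseteq> carr lim"
  shows "set (map some_elem as) \<subseteq> points"
proof
  fix p assume "p \<in> set (map some_elem as)"
  then obtain a where a: "a \<in> set as" "p = some_elem a" by auto
  have "some_elem a \<in> points" using assms a(1) by (intro some_elem_lim_carr) blast
  then show "p \<in> points" using a(2) by simp
qed

lemma cst_lim_stage:
  obtains x j where "j \<in> I" "x \<in> X j" "(True, EqC x c) \<in> phi j"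
    "cst lim c = limit_rel I le X gam `` {(x, j)}"
proof -
  let ?Q = "\<lambda>(x, i). i \<in> I \<and> x \<in> X i \<and> (True, EqC x c) \<in> phi i"
  have "\<exists>p. ?Q p" using constants_named by blast
  then have "?Q (SOME p. ?Q p)" by (rule someI_ex)
  moreover obtain x j where xj: "(SOME p. ?Q p) = (x, j)" by fastforce
  ultimately have "?Q (x, j)" by simp
  moreover have "cst lim c = limit_rel I le X gam `` {(x, j)}"
    using xj by (simp add: cst_limit_alg)
  ultimately show thesis using that by auto
qed

lemma opr_lim_stage:
  assumes len: "length as = ar F" and as: "set as \<subseteq> carr lim"
  obtains x j where "j \<in> I" "x \<in> X j" "\<forall>p\<in>set (map some_elem as). le (snd p) j"
    "(True, EqOp F (map (\<lambda>p. gam (snd p) j (fst p)) (map some_elem as)) x) \<in> phi j"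
    "opr lim F as = limit_rel I le X gam `` {(x, j)}"
proof -
  let ?Q = "\<lambda>(x, j). j \<in> I \<and> x \<in> X j \<and> (\<forall>a\<in>set as. le (snd (some_elem a)) j)
       \<and> (True, EqOp F (map (\<lambda>a. gam (snd (some_elem a)) j (fst (some_elem a))) as) x) \<in> phi j"
  from operation_defined_above[OF some_elem_list_points[OF as]] len
  have "\<exists>p. ?Q p" by (simp add: comp_def)
  then have "?Q (SOME p. ?Q p)" by (rule someI_ex)
  moreover obtain x j where xj: "(SOME p. ?Q p) = (x, j)" by fastforce
  ultimately have "?Q (x, j)" by simp
  moreover have "opr lim F as = limit_rel I le X gam `` {(x, j)}"
    using xj by (simp add: opr_limit_alg)
  ultimately show thesis by (intro that) (simp_all add: comp_def)
qed

end

section \<open>The embedding into the ultraproduct\<close>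

locale realized_sys = direct_sys ar I le X phi gam
  for ar :: "'f \<Rightarrow> nat" and I :: "'i set" and le and X :: "'i \<Rightarrow> 'v set"
    and phi :: "'i \<Rightarrow> ('f,'c,'v) lit set" and gam +
  fixes B :: "'i \<Rightarrow> ('b,'f,'c) alg" and s :: "'i \<Rightarrow> 'v \<Rightarrow> 'b" and D :: "'i set set"
  assumes alg_B: "\<And>i. i \<in> I \<Longrightarrow> is_alg ar (B i)"
    and s_in_carr: "\<And>i x. i \<in> I \<Longrightarrow> x \<in> X i \<Longrightarrow> s i x \<in> carr (B i)"
    and s_holds: "\<And>i l. i \<in> I \<Longrightarrow> l \<in> phi i \<Longrightarrow> lit_holds (B i) (s i) l"
    and ultrafilter: "ultrafilter_on I D"
    and cone_in_D: "\<And>i. i \<in> I \<Longrightarrow> {k\<in>I. le i k} \<in> D"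
begin

abbreviation ultra :: "(('i \<Rightarrow> 'b) set,'f,'c) alg" where
  "ultra \<equiv> ultraproduct I D B"

lemma D_proper: "proper_filter_on I D"
  using ultrafilter unfolding ultrafilter_on_iff by blast

lemma equiv_ultra: "equiv (product_carrier I B) (ultra_rel I D B)"
  by (rule equiv_ultra_rel[OF D_proper])

lemma eventually_above:
  assumes "i \<in> I" "\<And>k. k \<in> I \<Longrightarrow> le i k \<Longrightarrow> Q k"
  shows "{k\<in>I. Q k} \<in> D"
  by (rule proper_filter_on_mono_pred[OF D_proper cone_in_D[OF assms(1)]]) (use assms(2) in blast)

lemma s_inj:
  assumes "i \<in> I" "x \<in> X i" "y \<in> X i" "s i x = s i y"
  shows "x = y"
proof (rule ccontr)
  assume "x \<noteq> y"
  then have "(False, EqV x y) \<in> phi i" using distinct_vars assms(1-3) by blast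
  then have "lit_holds (B i) (s i) (False, EqV x y)" using s_holds assms(1) by blast
  with assms(4) show False unfolding lit_holds_def by simp
qed

lemma s_holds_above:
  assumes "i \<in> I" "k \<in> I" "le i k" "(True, a) \<in> phi i"
  shows "atom_holds (B k) (s k) (atom_map (gam i k) a)"
proof -
  have "lit_map (gam i k) (True, a) \<in> phi k" using gam_phi assms(1-4) by blast
  then have "(True, atom_map (gam i k) a) \<in> phi k" unfolding lit_map_def by simp
  then show ?thesis using s_holds[OF assms(2)] unfolding lit_holds_def by fastforce
qed

text \<open>Outside the cone above the stage of p the thread is padded arbitrarily; this is invisible
  modulo D, which contains every cone.\<close>
definition thread :: "'v \<times> 'i \<Rightarrow> 'i \<Rightarrow> 'b" where
  "thread p k = (if k \<in> I \<and> le (snd p) k then s k (gam (snd p) k (fst p)) else some_elem (carr (B k)))"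

definition ultra_embed :: "('v \<times> 'i) set \<Rightarrow> ('i \<Rightarrow> 'b) set" where
  "ultra_embed a = ultra_rel I D B `` {thread (some_elem a)}"

lemma thread_above: "i \<in> I \<Longrightarrow> k \<in> I \<Longrightarrow> le i k \<Longrightarrow> thread (x, i) k = s k (gam i k x)"
  by (simp add: thread_def)

lemma thread_in_product: "p \<in> points \<Longrightarrow> thread p \<in> product_carrier I B"
proof -
  assume "p \<in> points"
  then obtain x i where p: "p = (x, i)" "i \<in> I" "x \<in> X i" by blast
  have "thread p k \<in> carr (B k)" if "k \<in> I" for k
  proof (cases "le i k")
    case True
    then show ?thesis using p that gam_X s_in_carr by (simp add: thread_def)
  next
    case False
    have "carr (B k) \<noteq> {}" by (rule is_alg_carr_nonempty[OF alg_B[OF that]])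
    then show ?thesis using p False by (simp add: thread_def some_elem_nonempty)
  qed
  then show ?thesis unfolding product_carrier_def by blast
qed

lemma limit_rel_imp_thread_ultra_rel:
  assumes p: "p \<in> points" and q: "q \<in> points" and pq: "(p, q) \<in> limit_rel I le X gam"
  shows "(thread p, thread q) \<in> ultra_rel I D B"
proof -
  obtain x i y j where xy: "p = (x, i)" "q = (y, j)" by fastforce
  obtain k1 where k1: "i \<in> I" "j \<in> I" "x \<in> X i" "y \<in> X j" "k1 \<in> I" "le i k1" "le j k1"
    "gam i k1 x = gam j k1 y"
    using pq unfolding xy limit_rel_iff by blast
  have "{k\<in>I. thread p k = thread q k} \<in> D"
  proof (rule eventually_above[OF k1(5)])
    fix k assume k: "k \<in> I" "le k1 k"
    then have "le i k" "le j k" using index_trans k1 by blast+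
    moreover have "gam i k x = gam j k y"
      by (rule gam_agree_above[of i j k1 k x y]) (use k1 k in blast)+
    ultimately show "thread p k = thread q k" using xy k1 k(1) thread_above by simp
  qed
  then show ?thesis using thread_in_product p q by (simp add: ultra_rel_iff)
qed

lemma thread_ultra_rel_imp_limit_rel:
  assumes p: "p \<in> points" and q: "q \<in> points" and pq: "(thread p, thread q) \<in> ultra_rel I D B"
  shows "(p, q) \<in> limit_rel I le X gam"
proof -
  obtain x i y j where xy: "p = (x, i)" "q = (y, j)" "i \<in> I" "x \<in> X i" "j \<in> I" "y \<in> X j"
    using p q by blast
  obtain k0 where k0: "k0 \<in> I" "le i k0" "le j k0" using index_directed xy(3,5) by blast
  have "{k\<in>I. thread p k = thread q k} \<in> D" using pq by (simp add: ultra_rel_iff)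
  then have "{k\<in>I. thread p k = thread q k \<and> le k0 k} \<in> D"
    by (rule proper_filter_on_conj[OF D_proper _ cone_in_D[OF k0(1)]])
  from proper_filter_on_witness[OF D_proper this]
  obtain k where k: "k \<in> I" "le k0 k" "thread p k = thread q k" by blast
  have above: "le i k" "le j k" using index_trans k0 xy(3,5) k(1,2) by blast+
  then have "s k (gam i k x) = s k (gam j k y)" using k xy thread_above by simp
  then have "gam i k x = gam j k y" using s_inj k(1) gam_X above xy by blast
  then show ?thesis unfolding xy(1,2) limit_rel_iff using xy above k(1) by blast
qed

lemma thread_ultra_rel_iff:
  "p \<in> points \<Longrightarrow> q \<in> points \<Longrightarrow>
    (thread p, thread q) \<in> ultra_rel I D B \<longleftrightarrow> (p, q) \<in> limit_rel I le X gam"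
  using limit_rel_imp_thread_ultra_rel thread_ultra_rel_imp_limit_rel by blast

lemma thread_some_elem_ultra_embed:
  "a \<in> carr lim \<Longrightarrow> (thread (some_elem a), some_elem (ultra_embed a)) \<in> ultra_rel I D B"
  unfolding ultra_embed_def
  by (rule equiv_some_elem_class[OF equiv_ultra thread_in_product[OF some_elem_lim_carr]])

lemma ultra_embed_class:
  assumes p: "p \<in> points"
  shows "ultra_embed (limit_rel I le X gam `` {p}) = ultra_rel I D B `` {thread p}"
proof -
  let ?a = "limit_rel I le X gam `` {p}"
  have "?a \<in> points // limit_rel I le X gam" using p by (rule quotientI)
  then have q: "some_elem ?a \<in> points" by (rule quotient_some_elem(1)[OF equiv_limit_rel])
  have "(p, some_elem ?a) \<in> limit_rel I le X gam"
    by (rule equiv_some_elem_class[OF equiv_limit_rel p])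
  then have "(thread p, thread (some_elem ?a)) \<in> ultra_rel I D B"
    unfolding thread_ultra_rel_iff[OF p q] .
  then show ?thesis unfolding ultra_embed_def by (rule equiv_class_eq[OF equiv_ultra, symmetric])
qed

lemma ultra_embed_in_carr: "a \<in> carr lim \<Longrightarrow> ultra_embed a \<in> carr ultra"
  unfolding carr_ultraproduct ultra_embed_def
  by (rule quotientI, rule thread_in_product, rule some_elem_lim_carr)

lemma inj_on_ultra_embed: "inj_on ultra_embed (carr lim)"
proof (rule inj_onI)
  fix a b assume a: "a \<in> carr lim" and b: "b \<in> carr lim" and eq: "ultra_embed a = ultra_embed b"
  note p = quotient_some_elem[OF equiv_limit_rel a[unfolded carr_limit_alg]]
  note q = quotient_some_elem[OF equiv_limit_rel b[unfolded carr_limit_alg]]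
  have "ultra_rel I D B `` {thread (some_elem a)} = ultra_rel I D B `` {thread (some_elem b)}"
    using eq unfolding ultra_embed_def .
  then have "(thread (some_elem a), thread (some_elem b)) \<in> ultra_rel I D B"
    by (rule eq_equiv_class[OF _ equiv_ultra thread_in_product[OF q(1)]])
  then have "(some_elem a, some_elem b) \<in> limit_rel I le X gam"
    unfolding thread_ultra_rel_iff[OF p(1) q(1)] .
  then have "limit_rel I le X gam `` {some_elem a} = limit_rel I le X gam `` {some_elem b}"
    by (rule equiv_class_eq[OF equiv_limit_rel])
  then show "a = b" using p(2) q(2) by argo
qed

lemma thread_cst_above:
  assumes "j \<in> I" "(True, EqC x c) \<in> phi j" "k \<in> I" "le j k"
  shows "thread (x, j) k = cst (B k) c"
  using s_holds_above[OF assms(1,3,4,2)] thread_above[OF assms(1,3,4)] by simp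

lemma ultra_embed_cst: "ultra_embed (cst lim c) = cst ultra c"
proof -
  obtain x j where j: "j \<in> I" "x \<in> X j" "(True, EqC x c) \<in> phi j"
    "cst lim c = limit_rel I le X gam `` {(x, j)}"
    by (rule cst_lim_stage)
  have "{k\<in>I. thread (x, j) k = cst (B k) c} \<in> D"
    by (rule eventually_above[OF j(1)]) (use thread_cst_above j in blast)
  moreover have "(\<lambda>k. cst (B k) c) \<in> product_carrier I B"
    using is_alg_cst_closed[OF alg_B] unfolding product_carrier_def by blast
  ultimately have "(thread (x, j), \<lambda>k. cst (B k) c) \<in> ultra_rel I D B"
    using thread_in_product j(1,2) by (simp add: ultra_rel_iff)
  then have "ultra_rel I D B `` {thread (x, j)} = ultra_rel I D B `` {\<lambda>k. cst (B k) c}"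
    by (rule equiv_class_eq[OF equiv_ultra])
  then show ?thesis using ultra_embed_class j by (simp add: cst_ultraproduct)
qed

lemma thread_opr_above:
  assumes j: "j \<in> I" and ps: "\<forall>p\<in>set ps. p \<in> points \<and> le (snd p) j"
    and op: "(True, EqOp F (map (\<lambda>p. gam (snd p) j (fst p)) ps) x) \<in> phi j"
    and k: "k \<in> I" "le j k"
  shows "thread (x, j) k = opr (B k) F (map (\<lambda>p. thread p k) ps)"
proof -
  have "atom_holds (B k) (s k) (atom_map (gam j k) (EqOp F (map (\<lambda>p. gam (snd p) j (fst p)) ps) x))"
    by (rule s_holds_above[OF j k op])
  then have "opr (B k) F (map (\<lambda>p. s k (gam j k (gam (snd p) j (fst p)))) ps) = s k (gam j k x)"
    by (simp add: comp_def)
  moreover have "map (\<lambda>p. s k (gam j k (gam (snd p) j (fst p)))) ps = map (\<lambda>p. thread p k) ps"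
  proof (rule map_cong[OF refl])
    fix p assume "p \<in> set ps"
    then obtain y i where p: "p = (y, i)" "i \<in> I" "y \<in> X i" "le i j" using ps by auto
    then have "le i k" using index_trans j k by blast
    then show "s k (gam j k (gam (snd p) j (fst p))) = thread p k"
      using gam_comp p j k thread_above by simp
  qed
  ultimately show ?thesis using thread_above[OF j k] by simp
qed

lemma thread_opr_eventually:
  assumes len: "length as = ar F" and as: "set as \<subseteq> carr lim"
    and j: "j \<in> I" "\<forall>p\<in>set (map some_elem as). le (snd p) j"
    and op: "(True, EqOp F (map (\<lambda>p. gam (snd p) j (fst p)) (map some_elem as)) x) \<in> phi j"
  shows "{k\<in>I. thread (x, j) k = opr (B k) F (map (\<lambda>b. some_elem b k) (map ultra_embed as))} \<in> D"
proof -
  have "{k\<in>I. \<forall>a\<in>set as. thread (some_elem a) k = some_elem (ultra_embed a) k} \<in> D"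
    using thread_some_elem_ultra_embed as
    by (intro proper_filter_on_list_all[OF D_proper]) (auto simp: ultra_rel_iff)
  then have "{k\<in>I. (\<forall>a\<in>set as. thread (some_elem a) k = some_elem (ultra_embed a) k) \<and> le j k} \<in> D"
    by (rule proper_filter_on_conj[OF D_proper _ cone_in_D[OF j(1)]])
  then show ?thesis
  proof (rule proper_filter_on_mono_pred[OF D_proper])
    fix k assume k: "k \<in> I" "(\<forall>a\<in>set as. thread (some_elem a) k = some_elem (ultra_embed a) k) \<and> le j k"
    have ps: "\<forall>p\<in>set (map some_elem as). p \<in> points \<and> le (snd p) j"
      using some_elem_list_points[OF as] j(2) by blast
    have args: "map (\<lambda>p. thread p k) (map some_elem as) = map (\<lambda>b. some_elem b k) (map ultra_embed as)"
      using k(2) by simp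
    have "thread (x, j) k = opr (B k) F (map (\<lambda>p. thread p k) (map some_elem as))"
      using thread_opr_above[OF j(1) ps op k(1)] k(2) by blast
    also have "\<dots> = opr (B k) F (map (\<lambda>b. some_elem b k) (map ultra_embed as))"
      by (simp only: args)
    finally show "thread (x, j) k = opr (B k) F (map (\<lambda>b. some_elem b k) (map ultra_embed as))" .
  qed
qed

lemma ultra_embed_opr:
  assumes len: "length as = ar F" and as: "set as \<subseteq> carr lim"
  shows "ultra_embed (opr lim F as) = opr ultra F (map ultra_embed as)"
proof -
  obtain x j where j: "j \<in> I" "x \<in> X j" "\<forall>p\<in>set (map some_elem as). le (snd p) j"
    "(True, EqOp F (map (\<lambda>p. gam (snd p) j (fst p)) (map some_elem as)) x) \<in> phi j"
    "opr lim F as = limit_rel I le X gam `` {(x, j)}"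
    by (rule opr_lim_stage[OF len as])
  let ?g = "\<lambda>k. opr (B k) F (map (\<lambda>b. some_elem b k) (map ultra_embed as))"
  have "{k\<in>I. thread (x, j) k = ?g k} \<in> D"
    by (rule thread_opr_eventually[OF len as j(1,3,4)])
  moreover have "?g \<in> product_carrier I B"
    using ultra_embed_in_carr as len
    by (intro opr_representatives_in_product[OF D_proper alg_B]) auto
  ultimately have "(thread (x, j), ?g) \<in> ultra_rel I D B"
    using thread_in_product j(1,2) by (simp add: ultra_rel_iff)
  then have "ultra_rel I D B `` {thread (x, j)} = ultra_rel I D B `` {?g}"
    by (rule equiv_class_eq[OF equiv_ultra])
  then show ?thesis using ultra_embed_class j(1,2,5) by (simp add: opr_ultraproduct)
qed

lemma alg_embedding_ultra_embed: "alg_embedding ar lim ultra ultra_embed"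
  unfolding alg_embedding_def
proof (intro conjI ballI allI impI)
  show "ultra_embed a \<in> carr ultra" if "a \<in> carr lim" for a
    using that by (rule ultra_embed_in_carr)
  show "inj_on ultra_embed (carr lim)" by (rule inj_on_ultra_embed)
  show "ultra_embed (cst lim c) = cst ultra c" for c by (rule ultra_embed_cst)
  show "ultra_embed (opr lim F as) = opr ultra F (map ultra_embed as)"
    if "length as = ar F \<and> set as \<subseteq> carr lim" for F as
    using that ultra_embed_opr by blast
qed

end

lemma (in direct_sys) realized_sys_exists:
  assumes "\<forall>i\<in>I. is_alg ar (B i)" and "\<forall>i\<in>I. realized (B i) (X i) (phi i)"
  shows "\<exists>s D. realized_sys ar I le X phi gam B s D"
proof -
  have "\<exists>D. ultrafilter_on I D \<and> (\<forall>i\<in>I. {k\<in>I. le i k} \<in> D)"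
  proof (rule directed_cones_ultrafilter)
    show "I \<noteq> {}" by (rule index_nonempty)
    show "le i i" if "i \<in> I" for i using that by (rule index_refl)
    show "le i k" if "i \<in> I" "j \<in> I" "k \<in> I" "le i j" "le j k" for i j k
      using that by (rule index_trans)
    show "\<exists>k\<in>I. le i k \<and> le j k" if "i \<in> I" "j \<in> I" for i j
      using that by (rule index_directed)
  qed
  then obtain D where D: "ultrafilter_on I D" "\<forall>i\<in>I. {k\<in>I. le i k} \<in> D" by blast
  have "\<forall>i\<in>I. \<exists>t. (\<forall>x\<in>X i. t x \<in> carr (B i)) \<and> (\<forall>l\<in>phi i. lit_holds (B i) t l)"
    using assms(2) unfolding realized_def .
  from bchoice[OF this] obtain s
    where s: "\<forall>i\<in>I. (\<forall>x\<in>X i. s i x \<in> carr (B i)) \<and> (\<forall>l\<in>phi i. lit_holds (B i) (s i) l)"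
    by blast
  have "realized_sys ar I le X phi gam B s D"
  proof unfold_locales
    show "is_alg ar (B i)" if "i \<in> I" for i using assms(1) that by blast
    show "s i x \<in> carr (B i)" if "i \<in> I" "x \<in> X i" for i x using s that by blast
    show "lit_holds (B i) (s i) l" if "i \<in> I" "l \<in> phi i" for i l using s that by blast
    show "ultrafilter_on I D" by (fact D(1))
    show "{k\<in>I. le i k} \<in> D" if "i \<in> I" for i using D(2) that by blast
  qed
  then show ?thesis by blast
qed

theorem mainTheorem10:
  fixes ar :: "'f \<Rightarrow> nat"
    and I :: "'i set" and le :: "'i \<Rightarrow> 'i \<Rightarrow> bool"
    and Fs :: "'i \<Rightarrow> 'f set" and Cs :: "'i \<Rightarrow> 'c set"
    and X :: "'i \<Rightarrow> 'v set" and phi :: "'i \<Rightarrow> ('f,'c,'v) lit set"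
    and gam :: "'i \<Rightarrow> 'i \<Rightarrow> 'v \<Rightarrow> 'v"
    and B :: "'i \<Rightarrow> ('b,'f,'c) alg"
  assumes "direct_system ar I le Fs Cs X phi gam"
    and "\<forall>i\<in>I. is_alg ar (B i)"
    and "\<forall>i\<in>I. realized (B i) (X i) (phi i)"
  shows "\<exists>D. ultrafilter_on I D \<and>
           (\<exists>h. alg_embedding ar (limit_alg I le X phi gam) (ultraproduct I D B) h)"
proof -
  have "direct_sys ar I le X phi gam"
    using assms(1) by (rule direct_system_imp_direct_sys)
  then obtain s D where "realized_sys ar I le X phi gam B s D"
    using direct_sys.realized_sys_exists assms(2,3) by blast
  then interpret realized_sys ar I le X phi gam B s D .
  show ?thesis using ultrafilter alg_embedding_ultra_embed by blast
qed

end
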